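(* For every finite set $I$ of positive integers, $d(I;0)=(-1)^{\#I}$, where $d(I;z)$ denotes the descent polynomial evaluated at $z=0$.
   Context: For a finite set $I$ of positive integers with $m=\max(I\cup\{0\})$, and $n>m$, $d(I;n)$ is the number of permutations $\pi\in\mathfrak S_n$ with descent set $\{i\mid\pi_i>\pi_{i+1}\}$ equal to $I$. This is a polynomial in $n$, and $d(I;z)$ denotes that polynomial evaluated at an arbitrary complex number $z$. *)

theory Defs
  imports "HOL-Combinatorics.Permutations" "HOL-Computational_Algebra.Polynomial" Complex_Main
begin

definition descent_set :: "nat \<Rightarrow> (nat \<Rightarrow> nat) \<Rightarrow> nat set" where
  "descent_set n \<pi> = {i. 1 \<le> i \<and> i < n \<and> \<pi> i > \<pi> (Suc i)}"

definition desc_count :: "nat set \<Rightarrow> nat \<Rightarrow> nat" where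
  "desc_count I n = card {\<pi>. \<pi> permutes {1..n} \<and> descent_set n \<pi> = I}"

definition desc_poly :: "nat set \<Rightarrow> complex poly" where
  "desc_poly I = (THE p. \<forall>n. n > Max (I \<union> {0}) \<longrightarrow>
       poly p (of_nat n) = of_nat (desc_count I n))"

end

theory Submission
  imports Defs
begin

text \<open>Let \<open>m = max I\<close> and \<open>n \<ge> m\<close>. Sorting the permutations of \<open>{1..n}\<close> whose descents
  outside \<open>m\<close> form \<open>I - {m}\<close> by the set \<open>S\<close> of values in the first \<open>m\<close> positions, each
  fibre is in bijection with the permutations of \<open>{1..m}\<close> with descent set \<open>I - {m}\<close>
  (standardize the first block; the remaining values must appear increasingly).
  Hence \<open>d(I - {m}; n) + d(I; n) = binomial n m * d(I - {m}; m)\<close>, so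
  \<open>d(I; z) = binomial z m * d(I - {m}; m) - d(I - {m}; z)\<close> as polynomials. As \<open>binomial z m\<close>
  vanishes at \<open>z = 0\<close> for \<open>m > 0\<close>, \<open>d(I; 0) = - d(I - {m}; 0)\<close>, and induction from
  \<open>d({}; z) = 1\<close> gives the sign \<open>(-1) ^ card I\<close>.\<close>

definition rank_in :: "nat set \<Rightarrow> nat \<Rightarrow> nat" where
  "rank_in S x = card {y \<in> S. y \<le> x}"

text \<open>Ranks are 1-based: \<open>nth_in S i\<close> is the \<open>i\<close>-th smallest element of \<open>S\<close>
  for \<open>i \<in> {1..card S}\<close>.\<close>
definition nth_in :: "nat set \<Rightarrow> nat \<Rightarrow> nat" where
  "nth_in S = inv_into S (rank_in S)"

lemma strict_mono_on_rank_in: "strict_mono_on S (rank_in S)"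
proof (rule strict_mono_onI)
  fix x y assume "x \<in> S" "y \<in> S" "x < y"
  then have "{z \<in> S. z \<le> x} \<subset> {z \<in> S. z \<le> y}" by force
  then show "rank_in S x < rank_in S y"
    unfolding rank_in_def by (rule psubset_card_mono[rotated]) simp
qed

lemma bij_betw_rank_in:
  assumes "finite S"
  shows "bij_betw (rank_in S) S {1..card S}"
proof -
  have inj: "inj_on (rank_in S) S"
    by (rule strict_mono_on_imp_inj_on[OF strict_mono_on_rank_in])
  have "rank_in S x \<in> {1..card S}" if "x \<in> S" for x
  proof -
    have "x \<in> {y \<in> S. y \<le> x}" using that by simp
    then show ?thesis
      unfolding rank_in_def using assms by (auto simp: Suc_le_eq card_gt_0_iff intro: card_mono)
  qed
  then have "rank_in S ` S \<subseteq> {1..card S}" by blast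
  moreover have "card (rank_in S ` S) = card {1..card S}"
    using card_image[OF inj] by simp
  ultimately show ?thesis
    using inj assms by (simp add: bij_betw_def card_subset_eq)
qed

lemma bij_betw_nth_in: "finite S \<Longrightarrow> bij_betw (nth_in S) {1..card S} S"
  unfolding nth_in_def by (rule bij_betw_inv_into[OF bij_betw_rank_in])

lemma nth_in_rank_in: "x \<in> S \<Longrightarrow> nth_in S (rank_in S x) = x"
  unfolding nth_in_def
  by (rule inv_into_f_f[OF strict_mono_on_imp_inj_on[OF strict_mono_on_rank_in]])

lemma rank_in_nth_in: "finite S \<Longrightarrow> i \<in> {1..card S} \<Longrightarrow> rank_in S (nth_in S i) = i"
  unfolding nth_in_def using bij_betw_imp_surj_on[OF bij_betw_rank_in] by (metis f_inv_into_f)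

lemma strict_mono_on_nth_in:
  assumes "finite S"
  shows "strict_mono_on {1..card S} (nth_in S)"
proof (rule strict_mono_onI)
  fix i j assume ij: "i \<in> {1..card S}" "j \<in> {1..card S}" "i < j"
  have "nth_in S i \<in> S" "nth_in S j \<in> S"
    using ij bij_betw_apply[OF bij_betw_nth_in[OF assms]] by auto
  then show "nth_in S i < nth_in S j"
    using strict_mono_on_less[OF strict_mono_on_rank_in] rank_in_nth_in[OF assms] ij by metis
qed

lemma rank_in_image:
  assumes "strict_mono_on A f" "x \<in> A"
  shows "rank_in (f ` A) (f x) = rank_in A x"
proof -
  have "{y \<in> f ` A. y \<le> f x} = f ` {y \<in> A. y \<le> x}"
    using assms by (auto simp: strict_mono_on_less_eq)
  moreover have "inj_on f {y \<in> A. y \<le> x}"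
    by (rule inj_on_subset[OF strict_mono_on_imp_inj_on[OF assms(1)]]) auto
  ultimately show ?thesis
    unfolding rank_in_def by (simp add: card_image)
qed

lemma rank_in_greaterThanAtMost: "x \<in> {a<..b} \<Longrightarrow> rank_in {a<..b} x = x - a"
proof -
  assume "x \<in> {a<..b}"
  then have "{y \<in> {a<..b}. y \<le> x} = {a<..x}" by auto
  then show ?thesis unfolding rank_in_def by simp
qed

lemma strict_mono_onI_Suc:
  fixes f :: "nat \<Rightarrow> 'a :: order"
  assumes "\<And>i. a \<le> i \<Longrightarrow> i < b \<Longrightarrow> f i < f (Suc i)"
  shows "strict_mono_on {a..b} f"
proof (rule strict_mono_onI)
  fix x y assume "x \<in> {a..b}" "y \<in> {a..b}" "x < y"
  then have "Suc x \<le> y" "y \<le> b" "a \<le> x" by auto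
  then show "f x < f y"
  proof (induction y rule: dec_induct)
    case base
    then show ?case using assms by simp
  next
    case (step y)
    then show ?case using assms[of y] less_trans by fastforce
  qed
qed

definition standardize :: "nat \<Rightarrow> (nat \<Rightarrow> nat) \<Rightarrow> nat \<Rightarrow> nat" where
  "standardize m \<pi> i = (if i \<in> {1..m} then rank_in (\<pi> ` {1..m}) (\<pi> i) else i)"

text \<open>The inverse of \<open>standardize (card S)\<close> on the permutations sending \<open>{1..card S}\<close>
  onto \<open>S\<close> with no descent after position \<open>card S\<close>.\<close>
definition lift_perm :: "nat \<Rightarrow> nat set \<Rightarrow> (nat \<Rightarrow> nat) \<Rightarrow> nat \<Rightarrow> nat" where
  "lift_perm n S \<sigma> i =
     (if i \<in> {1..card S} then nth_in S (\<sigma> i)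
      else if i \<in> {card S<..n} then nth_in ({1..n} - S) (i - card S)
      else i)"

lemma standardize_permutes:
  assumes "inj \<pi>"
  shows "standardize m \<pi> permutes {1..m}"
proof (rule bij_imp_permutes)
  let ?S = "\<pi> ` {1..m}"
  have "bij_betw \<pi> {1..m} ?S"
    using assms by (simp add: inj_on_imp_bij_betw inj_on_subset)
  moreover have "card ?S = m"
    using assms by (simp add: card_image inj_on_subset)
  ultimately have "bij_betw (rank_in ?S \<circ> \<pi>) {1..m} {1..m}"
    using bij_betw_trans[OF _ bij_betw_rank_in] by (metis finite_imageI finite_atLeastAtMost)
  then show "bij_betw (standardize m \<pi>) {1..m} {1..m}"
    by (rule bij_betw_cong[THEN iffD1, rotated]) (simp add: standardize_def)
qed (auto simp: standardize_def)

lemma descent_set_standardize: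
  assumes "m \<le> n"
  shows "descent_set m (standardize m \<pi>) = descent_set n \<pi> \<inter> {..<m}"
proof -
  have "rank_in (\<pi> ` {1..m}) (\<pi> (Suc i)) < rank_in (\<pi> ` {1..m}) (\<pi> i) \<longleftrightarrow> \<pi> (Suc i) < \<pi> i"
    if "1 \<le> i" "i < m" for i
    using that by (intro strict_mono_on_less[OF strict_mono_on_rank_in]) auto
  then show ?thesis
    using assms by (auto simp: descent_set_def standardize_def)
qed

lemma bij_betw_lift_perm_low:
  assumes "finite S" "\<sigma> permutes {1..card S}"
  shows "bij_betw (lift_perm n S \<sigma>) {1..card S} S"
proof -
  have "bij_betw (nth_in S \<circ> \<sigma>) {1..card S} S"
    using bij_betw_trans[OF permutes_imp_bij[OF assms(2)] bij_betw_nth_in[OF assms(1)]] .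
  then show ?thesis
    by (rule bij_betw_cong[THEN iffD1, rotated]) (simp add: lift_perm_def)
qed

lemma image_lift_perm_low:
  "finite S \<Longrightarrow> \<sigma> permutes {1..card S} \<Longrightarrow> lift_perm n S \<sigma> ` {1..card S} = S"
  using bij_betw_imp_surj_on[OF bij_betw_lift_perm_low] .

lemma lift_perm_permutes:
  assumes S: "S \<subseteq> {1..n}" and \<sigma>: "\<sigma> permutes {1..card S}"
  shows "lift_perm n S \<sigma> permutes {1..n}"
proof (rule bij_imp_permutes)
  define m T where "m = card S" and "T = {1..n} - S"
  have fin: "finite S" "finite T" and m: "m \<le> n" and T: "card T = n - m"
    using S card_mono[OF _ S] finite_subset[OF S] by (auto simp: m_def T_def card_Diff_subset)
  have "bij_betw (rank_in {m<..n}) {m<..n} {1..card T}"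
    using bij_betw_rank_in[of "{m<..n}"] T by simp
  then have "bij_betw (\<lambda>i. i - m) {m<..n} {1..card T}"
    by (rule bij_betw_cong[THEN iffD1, rotated]) (simp add: rank_in_greaterThanAtMost)
  from bij_betw_trans[OF this bij_betw_nth_in[OF fin(2)]]
  have "bij_betw (lift_perm n S \<sigma>) {m<..n} T"
    by (rule bij_betw_cong[THEN iffD1, rotated]) (simp add: lift_perm_def m_def T_def)
  from bij_betw_combine[OF bij_betw_lift_perm_low[OF fin(1) \<sigma>] this[unfolded m_def]]
  have "bij_betw (lift_perm n S \<sigma>) ({1..m} \<union> {m<..n}) (S \<union> T)"
    by (auto simp: m_def T_def)
  moreover have "{1..m} \<union> {m<..n} = {1..n}" "S \<union> T = {1..n}"
    using m S by (auto simp: T_def)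
  ultimately show "bij_betw (lift_perm n S \<sigma>) {1..n} {1..n}" by simp
  show "lift_perm n S \<sigma> x = x" if "x \<notin> {1..n}" for x
    using that m by (auto simp: lift_perm_def m_def)
qed

lemma descent_set_lift_perm:
  assumes S: "S \<subseteq> {1..n}" and \<sigma>: "\<sigma> permutes {1..card S}"
  shows "descent_set n (lift_perm n S \<sigma>) - {card S} = descent_set (card S) \<sigma>"
proof -
  define m T where "m = card S" and "T = {1..n} - S"
  have fin: "finite S" "finite T" and m: "m \<le> n" and T: "card T = n - m"
    using S card_mono[OF _ S] finite_subset[OF S] by (auto simp: m_def T_def card_Diff_subset)
  have low: "nth_in S (\<sigma> (Suc i)) < nth_in S (\<sigma> i) \<longleftrightarrow> \<sigma> (Suc i) < \<sigma> i"
    if "1 \<le> i" "i < m" for i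
    using that permutes_in_image[OF \<sigma>]
    by (intro strict_mono_on_less[OF strict_mono_on_nth_in[OF fin(1)]]) (auto simp: m_def)
  have high: "nth_in T (i - m) < nth_in T (Suc i - m)" if "m < i" "i < n" for i
    using that T by (intro strict_mono_onD[OF strict_mono_on_nth_in[OF fin(2)]]) auto
  have "descent_set n (lift_perm n S \<sigma>) - {m} = descent_set m \<sigma>"
  proof (rule set_eqI)
    fix i
    show "i \<in> descent_set n (lift_perm n S \<sigma>) - {m} \<longleftrightarrow> i \<in> descent_set m \<sigma>"
    proof (cases "i < m")
      case True
      then show ?thesis using low m by (auto simp: descent_set_def lift_perm_def m_def)
    next
      case False
      then show ?thesis
        using high[of i] less_asym by (auto simp: descent_set_def lift_perm_def m_def T_def)
    qed
  qed
  then show ?thesis by (simp add: m_def)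
qed

lemma standardize_lift_perm:
  assumes S: "S \<subseteq> {1..n}" and \<sigma>: "\<sigma> permutes {1..card S}"
  shows "standardize (card S) (lift_perm n S \<sigma>) = \<sigma>"
proof
  fix i
  have fin: "finite S" using S finite_subset by blast
  have im: "lift_perm n S \<sigma> ` {1..card S} = S"
    using image_lift_perm_low[OF fin \<sigma>] .
  show "standardize (card S) (lift_perm n S \<sigma>) i = \<sigma> i"
  proof (cases "i \<in> {1..card S}")
    case True
    then have "standardize (card S) (lift_perm n S \<sigma>) i = rank_in S (nth_in S (\<sigma> i))"
      unfolding standardize_def im by (simp add: lift_perm_def)
    then show ?thesis
      using True permutes_in_image[OF \<sigma>] rank_in_nth_in[OF fin] by simp
  next
    case False
    then have "standardize (card S) (lift_perm n S \<sigma>) i = i"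
      unfolding standardize_def by (rule if_not_P)
    then show ?thesis using permutes_not_in[OF \<sigma> False] by simp
  qed
qed

lemma lift_perm_standardize:
  assumes \<pi>: "\<pi> permutes {1..n}" and m: "m \<le> n" and desc: "descent_set n \<pi> \<subseteq> {..m}"
  shows "lift_perm n (\<pi> ` {1..m}) (standardize m \<pi>) = \<pi>"
proof
  fix i
  define S T where "S = \<pi> ` {1..m}" and "T = {1..n} - S"
  have inj: "inj \<pi>" using permutes_inj[OF \<pi>] .
  have cardS: "card S = m" unfolding S_def using inj by (simp add: card_image inj_on_subset)
  have "strict_mono_on {Suc m..n} \<pi>"
  proof (rule strict_mono_onI_Suc)
    fix j assume "Suc m \<le> j" "j < n"
    then have "j \<notin> descent_set n \<pi>" using desc by auto
    then have "\<not> \<pi> j > \<pi> (Suc j)" using \<open>Suc m \<le> j\<close> \<open>j < n\<close> by (simp add: descent_set_def)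
    moreover have "\<pi> j \<noteq> \<pi> (Suc j)" using inj by (metis injD n_not_Suc_n)
    ultimately show "\<pi> j < \<pi> (Suc j)" by simp
  qed
  then have mono: "strict_mono_on {m<..n} \<pi>" by (simp add: atLeastSucAtMost_greaterThanAtMost)
  have "{m<..n} = {1..n} - {1..m}" by auto
  then have imT: "\<pi> ` {m<..n} = T"
    using inj permutes_image[OF \<pi>] by (simp add: T_def S_def image_set_diff)
  show "lift_perm n S (standardize m \<pi>) i = \<pi> i"
  proof (cases "i \<in> {1..m}")
    case True
    then have "standardize m \<pi> i = rank_in S (\<pi> i)"
      unfolding standardize_def S_def by (rule if_P)
    moreover have "\<pi> i \<in> S" using True by (simp add: S_def)
    ultimately show ?thesis using True by (simp add: lift_perm_def cardS nth_in_rank_in)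
  next
    case low: False
    show ?thesis
    proof (cases "i \<in> {m<..n}")
      case True
      have "nth_in T (i - m) = nth_in T (rank_in T (\<pi> i))"
        using rank_in_image[OF mono True] rank_in_greaterThanAtMost[OF True] imT by simp
      also have "\<dots> = \<pi> i"
        using True imT by (blast intro: nth_in_rank_in)
      finally show ?thesis
        using True low by (simp add: lift_perm_def cardS T_def)
    next
      case False
      with low have "i \<notin> {1..n}" by auto
      then show ?thesis
        using low False permutes_not_in[OF \<pi>] by (auto simp: lift_perm_def cardS)
    qed
  qed
qed

lemma card_permutes_descent_set_image:
  assumes J: "J \<subseteq> {1..<m}" and S: "S \<subseteq> {1..n}" "card S = m"
  shows "card {\<pi>. \<pi> permutes {1..n} \<and> descent_set n \<pi> - {m} = J \<and> \<pi> ` {1..m} = S}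
       = desc_count J m"
proof -
  define F where "F = {\<pi>. \<pi> permutes {1..n} \<and> descent_set n \<pi> - {m} = J \<and> \<pi> ` {1..m} = S}"
  define D where "D = {\<sigma>. \<sigma> permutes {1..m} \<and> descent_set m \<sigma> = J}"
  have m: "m \<le> n" using S card_mono[OF _ S(1)] by simp
  have "bij_betw (standardize m) F D"
  proof (rule bij_betw_byWitness[where f' = "lift_perm n S"])
    show "\<forall>\<pi>\<in>F. lift_perm n S (standardize m \<pi>) = \<pi>"
      using J m lift_perm_standardize by (fastforce simp: F_def)
    show "\<forall>\<sigma>\<in>D. standardize m (lift_perm n S \<sigma>) = \<sigma>"
      using standardize_lift_perm[OF S(1)] S(2) by (simp add: D_def)
    show "standardize m ` F \<subseteq> D"
      using J descent_set_standardize[OF m] standardize_permutes permutes_inj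
      by (fastforce simp: F_def D_def)
    show "lift_perm n S ` D \<subseteq> F"
    proof (rule image_subsetI)
      fix \<sigma> assume "\<sigma> \<in> D"
      then have \<sigma>: "\<sigma> permutes {1..card S}" "descent_set (card S) \<sigma> = J"
        using S(2) by (auto simp: D_def)
      show "lift_perm n S \<sigma> \<in> F"
        using lift_perm_permutes[OF S(1) \<sigma>(1)] descent_set_lift_perm[OF S(1) \<sigma>(1)]
          image_lift_perm_low[OF finite_subset[OF S(1)] \<sigma>(1)] \<sigma>(2) S(2)
        by (simp add: F_def)
    qed
  qed
  then show ?thesis
    unfolding desc_count_def F_def D_def by (rule bij_betw_same_card)
qed

lemma card_permutes_descent_set_minus:
  assumes m: "m \<le> n" and J: "J \<subseteq> {1..<m}"
  shows "card {\<pi>. \<pi> permutes {1..n} \<and> descent_set n \<pi> - {m} = J} = (n choose m) * desc_count J m"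
proof -
  define SS where "SS = {S. S \<subseteq> {1..n} \<and> card S = m}"
  define F where "F S = {\<pi>. \<pi> permutes {1..n} \<and> descent_set n \<pi> - {m} = J \<and> \<pi> ` {1..m} = S}" for S
  have "{\<pi>. \<pi> permutes {1..n} \<and> descent_set n \<pi> - {m} = J} = (\<Union>S\<in>SS. F S)"
  proof (intro equalityI subsetI)
    fix \<pi> assume \<pi>: "\<pi> \<in> {\<pi>. \<pi> permutes {1..n} \<and> descent_set n \<pi> - {m} = J}"
    then have "\<pi> ` {1..m} \<subseteq> {1..n}" "card (\<pi> ` {1..m}) = m"
      using permutes_image[of \<pi> "{1..n}"] permutes_inj_on[of \<pi> "{1..n}" "{1..m}"] m
      by (auto simp: card_image)
    then show "\<pi> \<in> (\<Union>S\<in>SS. F S)" using \<pi> by (auto simp: SS_def F_def)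
  qed (auto simp: F_def)
  also have "card \<dots> = (\<Sum>S\<in>SS. card (F S))"
  proof (rule card_UN_disjoint)
    show "finite SS" unfolding SS_def by (rule finite_subset[of _ "Pow {1..n}"]) auto
    show "\<forall>S\<in>SS. finite (F S)"
      unfolding F_def by (auto intro: finite_subset[OF _ finite_permutations[of "{1..n}"]])
  qed (auto simp: F_def)
  also have "\<dots> = card SS * desc_count J m"
    using card_permutes_descent_set_image[OF J] by (simp add: SS_def F_def)
  also have "card SS = n choose m"
    unfolding SS_def using n_subsets[of "{1..n}" m] by simp
  finally show ?thesis .
qed

lemma desc_count_empty: "desc_count {} n = 1"
proof -
  have "descent_set 0 \<sigma> = {}" for \<sigma> by (simp add: descent_set_def)
  then have "desc_count {} 0 = 1" by (simp add: desc_count_def)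
  moreover have "descent_set n \<pi> - {0} = descent_set n \<pi>" for \<pi>
    by (auto simp: descent_set_def)
  ultimately show ?thesis
    using card_permutes_descent_set_minus[of 0 n "{}"] by (simp add: desc_count_def)
qed

lemma desc_count_Max_recurrence:
  assumes "finite I" "I \<noteq> {}" "\<forall>i\<in>I. 0 < i" "Max I \<le> n"
  shows "desc_count (I - {Max I}) n + desc_count I n = (n choose Max I) * desc_count (I - {Max I}) (Max I)"
proof -
  let ?m = "Max I"
  have mI: "?m \<in> I" using assms by simp
  have J: "I - {?m} \<subseteq> {1..<?m}"
  proof
    fix i assume "i \<in> I - {?m}"
    then have "0 < i" "i \<le> ?m" "i \<noteq> ?m" using assms by auto
    then show "i \<in> {1..<?m}" by simp
  qed
  have "descent_set n \<pi> - {?m} = I - {?m} \<longleftrightarrow> descent_set n \<pi> = I - {?m} \<or> descent_set n \<pi> = I"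
    for \<pi> using mI by blast
  then have "{\<pi>. \<pi> permutes {1..n} \<and> descent_set n \<pi> - {?m} = I - {?m}}
      = {\<pi>. \<pi> permutes {1..n} \<and> descent_set n \<pi> = I - {?m}} \<union> {\<pi>. \<pi> permutes {1..n} \<and> descent_set n \<pi> = I}"
    by auto
  also have "card \<dots> = desc_count (I - {?m}) n + desc_count I n"
    unfolding desc_count_def
    by (rule card_Un_disjoint) (use mI finite_permutations[of "{1..n}"] in \<open>auto intro: finite_subset\<close>)
  finally show ?thesis
    using card_permutes_descent_set_minus[OF assms(4) J] by simp
qed

definition binomial_poly :: "nat \<Rightarrow> complex poly" where
  "binomial_poly m = smult (inverse (fact m)) (\<Prod>i<m. [:- of_nat i, 1:])"

lemma poly_binomial_poly_of_nat: "poly (binomial_poly m) (of_nat n) = of_nat (n choose m)"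
  unfolding binomial_poly_def binomial_gbinomial gbinomial_prod_rev
  by (simp add: poly_prod lessThan_atLeast0 field_simps)

lemma poly_binomial_poly_0: "0 < m \<Longrightarrow> poly (binomial_poly m) 0 = 0"
  unfolding binomial_poly_def by (simp add: poly_prod prod_zero_iff)

definition interpolates_desc_count :: "nat set \<Rightarrow> complex poly \<Rightarrow> bool" where
  "interpolates_desc_count I p \<longleftrightarrow>
     (\<forall>n. Max (I \<union> {0}) < n \<longrightarrow> poly p (of_nat n) = of_nat (desc_count I n))"

lemma ex_interpolates_desc_count:
  "finite I \<Longrightarrow> \<forall>i\<in>I. 0 < i \<Longrightarrow>
     \<exists>p. interpolates_desc_count I p \<and> poly p 0 = (-1) ^ card I"
proof (induction "card I" arbitrary: I)
  case 0
  then have "I = {}" by simp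
  then show ?case
    by (intro exI[of _ "[:1:]"]) (simp add: interpolates_desc_count_def desc_count_empty)
next
  case (Suc k)
  define m J where "m = Max I" and "J = I - {m}"
  have I: "I \<noteq> {}" using Suc.hyps(2) by auto
  have mI: "m \<in> I" and m0: "0 < m" and MaxI: "Max (I \<union> {0}) = m"
    using Suc.prems I by (auto simp: m_def intro: Max_eqI)
  have cardJ: "card I = Suc (card J)" and k: "k = card J"
    using Suc.hyps(2) Suc.prems(1) mI by (simp_all add: J_def)
  obtain q where q: "interpolates_desc_count J q" "poly q 0 = (-1) ^ card J"
    using Suc.hyps(1)[OF k] Suc.prems by (auto simp: J_def)
  have MaxJ: "Max (J \<union> {0}) \<le> m"
    using Suc.prems(1) by (intro Max.boundedI) (auto simp: J_def m_def)
  define p where "p = smult (of_nat (desc_count J m)) (binomial_poly m) - q"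
  have "poly p (of_nat n) = of_nat (desc_count I n)" if "m < n" for n
  proof -
    have "desc_count J n + desc_count I n = (n choose m) * desc_count J m"
      using desc_count_Max_recurrence[OF Suc.prems(1) I Suc.prems(2)] that
      by (simp add: J_def m_def)
    then have "(of_nat (desc_count J m) * of_nat (n choose m) :: complex)
               = of_nat (desc_count J n) + of_nat (desc_count I n)"
      by (metis mult.commute of_nat_add of_nat_mult)
    moreover have "poly q (of_nat n) = of_nat (desc_count J n)"
      using q(1) MaxJ that by (simp add: interpolates_desc_count_def)
    ultimately show ?thesis
      by (simp add: p_def poly_binomial_poly_of_nat)
  qed
  moreover have "poly p 0 = (-1) ^ card I"
    using q(2) cardJ by (simp add: p_def poly_binomial_poly_0[OF m0])
  ultimately show ?case
    using MaxI by (auto simp: interpolates_desc_count_def)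
qed

lemma poly_eqI_of_nat:
  fixes p q :: "'a :: {idom, ring_char_0} poly"
  assumes "\<And>n. M < n \<Longrightarrow> poly p (of_nat n) = poly q (of_nat n)"
  shows "p = q"
proof (rule ccontr)
  assume "p \<noteq> q"
  then have "finite {x. poly (p - q) x = 0}" by (intro poly_roots_finite) simp
  moreover have "of_nat ` {M<..} \<subseteq> {x. poly (p - q) x = 0}" using assms by auto
  ultimately have "finite ((of_nat :: nat \<Rightarrow> 'a) ` {M<..})" by (rule finite_subset[rotated])
  then show False
    using finite_imageD[OF _ inj_on_subset[OF inj_of_nat]] infinite_Ioi by blast
qed

lemma desc_poly_eqI: "interpolates_desc_count I p \<Longrightarrow> desc_poly I = p"
  unfolding desc_poly_def interpolates_desc_count_def[symmetric]
proof (rule the_equality)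
  fix p' assume "interpolates_desc_count I p'" "interpolates_desc_count I p"
  then show "p' = p"
    by (intro poly_eqI_of_nat[of "Max (I \<union> {0})"]) (simp add: interpolates_desc_count_def)
qed

theorem lemma3p8:
  fixes I :: "nat set"
  assumes "finite I" and "\<forall>i\<in>I. 0 < i"
  shows "poly (desc_poly I) 0 = (-1) ^ card I"
  using ex_interpolates_desc_count[OF assms] desc_poly_eqI by blast

end
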